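(* Let $(V,\{\nu_n\})$ be an $L^\infty$-MOS and $S\subseteq V$ an $L^\infty$-MOS ideal. Then $V/S$, with involution $(x+S)^*=x^*+S$ and with $M_n(V/S)_{sa}$ identified with $M_n(V)_{sa}/M_n(S)_{sa}$, together with the maps \[q_n(A+M_n(S)_{sa})=\inf\{\nu_n(B): B\in A+M_n(S)_{sa}\},\qquad A\in M_n(V)_{sa},\] is an $L^\infty$-MOS; in particular each $q_n$ is a proper gauge.
   Context: An $L^\infty$-MOS is a complex $*$-vector space $V$ ($M_n(V)$ with $(x_{ij})^*=(x_{ji}^* )$, self-adjoint part $M_n(V)_{sa}$) with proper gauges $\nu_n:M_n(V)_{sa}\to[0,\infty)$ (subadditive, positively homogeneous, $\nu_n(A)=\nu_n(-A)=0\Rightarrow A=0$) such that $\nu_k(X^*AX)\le\|X\|^2\nu_n(A)$ for scalar $X\in M_{n,k}$ and $\nu_{n+k}(A\oplus B)=\max\{\nu_n(A),\nu_k(B)\}$. For a gauged real vector space $(E,\nu)$, a subspace $T$ is a gauge ideal if whenever $x\in E$ and there are sequences $(a_j),(b_j)\subseteq T$ with $\nu(x-a_j)\to0$ and $\nu(b_j-x)\to0$, then $x\in T$. A self-adjoint subspace $S\subseteq V$ is an $L^\infty$-MOS ideal if $S_{sa}=S\cap V_{sa}$ is a gauge ideal of $(V_{sa},\nu_1)$. *)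

theory Defs
  imports Complex_Main
begin

text \<open>Matrices over V are represented as functions nat => nat => 'v; an n x n matrix
  is one whose entries vanish outside the index block {0..<n} x {0..<n}.\<close>

definition mats :: "nat \<Rightarrow> (nat \<Rightarrow> nat \<Rightarrow> 'v::zero) set" where
  "mats n = {A. \<forall>i j. \<not> (i < n \<and> j < n) \<longrightarrow> A i j = 0}"

definition star_space :: "(complex \<Rightarrow> 'v::real_vector \<Rightarrow> 'v) \<Rightarrow> ('v \<Rightarrow> 'v) \<Rightarrow> bool" where
  "star_space sc st \<longleftrightarrow>
     module sc \<and> (\<forall>(r::real) x. sc (complex_of_real r) x = r *\<^sub>R x) \<and>
     (\<forall>x y. st (x + y) = st x + st y) \<and>
     (\<forall>c x. st (sc c x) = sc (cnj c) (st x)) \<and>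
     (\<forall>x. st (st x) = x)"

definition mstar :: "('v \<Rightarrow> 'v) \<Rightarrow> (nat \<Rightarrow> nat \<Rightarrow> 'v) \<Rightarrow> nat \<Rightarrow> nat \<Rightarrow> 'v" where
  "mstar st A = (\<lambda>i j. st (A j i))"

definition msa :: "('v::zero \<Rightarrow> 'v) \<Rightarrow> nat \<Rightarrow> (nat \<Rightarrow> nat \<Rightarrow> 'v) set" where
  "msa st n = {A. A \<in> mats n \<and> mstar st A = A}"

definition mats_in :: "'v::zero set \<Rightarrow> nat \<Rightarrow> (nat \<Rightarrow> nat \<Rightarrow> 'v) set" where
  "mats_in N n = {A. A \<in> mats n \<and> (\<forall>i j. A i j \<in> N)}"

definition congr :: "(complex \<Rightarrow> 'v::real_vector \<Rightarrow> 'v) \<Rightarrow> nat \<Rightarrow> nat \<Rightarrow> (nat \<Rightarrow> nat \<Rightarrow> complex) \<Rightarrow> (nat \<Rightarrow> nat \<Rightarrow> 'v)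
                     \<Rightarrow> nat \<Rightarrow> nat \<Rightarrow> 'v" where
  "congr sc n k X A = (\<lambda>i j. if i < k \<and> j < k
      then (\<Sum>p<n. \<Sum>q<n. sc (cnj (X p i) * X q j) (A p q)) else 0)"

definition vnorm :: "nat \<Rightarrow> (nat \<Rightarrow> complex) \<Rightarrow> real" where
  "vnorm k v = sqrt (\<Sum>j<k. (cmod (v j))\<^sup>2)"

definition opnorm :: "nat \<Rightarrow> nat \<Rightarrow> (nat \<Rightarrow> nat \<Rightarrow> complex) \<Rightarrow> real" where
  "opnorm n k X = Sup {vnorm n (\<lambda>i. \<Sum>j<k. X i j * v j) | v. vnorm k v \<le> 1}"

definition dsum :: "nat \<Rightarrow> nat \<Rightarrow> (nat \<Rightarrow> nat \<Rightarrow> 'v::zero) \<Rightarrow> (nat \<Rightarrow> nat \<Rightarrow> 'v)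
                    \<Rightarrow> nat \<Rightarrow> nat \<Rightarrow> 'v" where
  "dsum n k A B = (\<lambda>i j. if i < n \<and> j < n then A i j
      else if n \<le> i \<and> n \<le> j \<and> i < n + k \<and> j < n + k then B (i - n) (j - n) else 0)"

definition sa_subspace :: "(complex \<Rightarrow> 'v::real_vector \<Rightarrow> 'v) \<Rightarrow> ('v \<Rightarrow> 'v) \<Rightarrow> 'v set \<Rightarrow> bool" where
  "sa_subspace sc st N \<longleftrightarrow> 0 \<in> N \<and> (\<forall>x\<in>N. \<forall>y\<in>N. x + y \<in> N)
     \<and> (\<forall>c. \<forall>x\<in>N. sc c x \<in> N) \<and> (\<forall>x\<in>N. st x \<in> N)"

text \<open>L^infty-MOS structure on the quotient V/N, presented through representatives:
  M_n(V/N)_sa is identified with M_n(V)_sa / M_n(N)_sa, so each gauge nu_n is a function on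
  M_n(V)_sa that is constant on cosets of M_n(N)_sa, and properness is modulo M_n(N).\<close>
definition LinfMOS_mod ::
  "(complex \<Rightarrow> 'v::real_vector \<Rightarrow> 'v) \<Rightarrow> ('v \<Rightarrow> 'v) \<Rightarrow> 'v set \<Rightarrow> (nat \<Rightarrow> (nat \<Rightarrow> nat \<Rightarrow> 'v) \<Rightarrow> real) \<Rightarrow> bool" where
  "LinfMOS_mod sc st N \<nu> \<longleftrightarrow>
     star_space sc st \<and> sa_subspace sc st N \<and>
     (\<forall>n\<ge>1. \<forall>A\<in>msa st n. \<forall>B\<in>msa st n. (\<lambda>i j. A i j - B i j) \<in> mats_in N n \<longrightarrow> \<nu> n A = \<nu> n B) \<and>
     (\<forall>n\<ge>1. \<forall>A\<in>msa st n. 0 \<le> \<nu> n A) \<and>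
     (\<forall>n\<ge>1. \<forall>A\<in>msa st n. \<forall>B\<in>msa st n. \<nu> n (\<lambda>i j. A i j + B i j) \<le> \<nu> n A + \<nu> n B) \<and>
     (\<forall>n\<ge>1. \<forall>A\<in>msa st n. \<forall>t::real. t \<ge> 0 \<longrightarrow> \<nu> n (\<lambda>i j. t *\<^sub>R A i j) = t * \<nu> n A) \<and>
     (\<forall>n\<ge>1. \<forall>A\<in>msa st n. \<nu> n A = 0 \<and> \<nu> n (\<lambda>i j. - A i j) = 0 \<longrightarrow> A \<in> mats_in N n) \<and>
     (\<forall>n\<ge>1. \<forall>k\<ge>1. \<forall>X. \<forall>A\<in>msa st n.
         \<nu> k (congr sc n k X A) \<le> (opnorm n k X)\<^sup>2 * \<nu> n A) \<and>
     (\<forall>n\<ge>1. \<forall>k\<ge>1. \<forall>A\<in>msa st n. \<forall>B\<in>msa st k.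
         \<nu> (n + k) (dsum n k A B) = max (\<nu> n A) (\<nu> k B))"

definition LinfMOS ::
  "(complex \<Rightarrow> 'v::real_vector \<Rightarrow> 'v) \<Rightarrow> ('v \<Rightarrow> 'v) \<Rightarrow> (nat \<Rightarrow> (nat \<Rightarrow> nat \<Rightarrow> 'v) \<Rightarrow> real) \<Rightarrow> bool" where
  "LinfMOS sc st \<nu> \<longleftrightarrow> LinfMOS_mod sc st {0} \<nu>"

definition gauge_ideal :: "'e::real_vector set \<Rightarrow> ('e \<Rightarrow> real) \<Rightarrow> 'e set \<Rightarrow> bool" where
  "gauge_ideal E g T \<longleftrightarrow>
     (\<forall>x\<in>E. (\<exists>a b. (\<forall>j. a j \<in> T \<and> b j \<in> T) \<and>
                   (\<lambda>j. g (x - a j)) \<longlonglongrightarrow> 0 \<and> (\<lambda>j. g (b j - x)) \<longlonglongrightarrow> 0) \<longrightarrow> x \<in> T)"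

definition emb1 :: "'v::zero \<Rightarrow> nat \<Rightarrow> nat \<Rightarrow> 'v" where
  "emb1 x = (\<lambda>i j. if i = 0 \<and> j = 0 then x else 0)"

definition LinfMOS_ideal ::
  "(complex \<Rightarrow> 'v::real_vector \<Rightarrow> 'v) \<Rightarrow> ('v \<Rightarrow> 'v) \<Rightarrow> (nat \<Rightarrow> (nat \<Rightarrow> nat \<Rightarrow> 'v) \<Rightarrow> real) \<Rightarrow> 'v set \<Rightarrow> bool" where
  "LinfMOS_ideal sc st \<nu> S \<longleftrightarrow> sa_subspace sc st S \<and>
     gauge_ideal {x. st x = x} (\<lambda>x. \<nu> 1 (emb1 x)) (S \<inter> {x. st x = x})"

definition quot_gauge ::
  "('v::real_vector \<Rightarrow> 'v) \<Rightarrow> (nat \<Rightarrow> (nat \<Rightarrow> nat \<Rightarrow> 'v) \<Rightarrow> real) \<Rightarrow> 'v set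
     \<Rightarrow> nat \<Rightarrow> (nat \<Rightarrow> nat \<Rightarrow> 'v) \<Rightarrow> real" where
  "quot_gauge st \<nu> S n A = Inf {\<nu> n B | B. B \<in> msa st n \<and> (\<lambda>i j. B i j - A i j) \<in> mats_in S n \<inter> msa st n}"

end

theory Submission
  imports Defs
begin

text \<open>The quotient gauge of a coset is an infimum of gauges of its representatives, and every
  gauge axiom except properness is an inequality that survives passing to such infima, because
  sums, positive multiples, compressions X* A X and direct sums map cosets into cosets.
  Properness is where the ideal hypothesis enters: if q_n(A) = q_n(-A) = 0, compressing
  A by a scalar column a e_i + b e_k produces a self-adjoint element of V that is approximated
  in nu_1 from below and from above by elements of S, hence lies in S; polarization over
  (a, b) in {(1,0), (0,1), (1,1), (1,i)} then recovers every entry of A.\<close>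

subsection \<open>Scalar matrices\<close>

lemma opnorm_bounded:
  assumes "0 \<le> K" and "\<And>v. vnorm k v \<le> 1 \<Longrightarrow> vnorm n (\<lambda>i. \<Sum>j<k. X i j * v j) \<le> K"
  shows "0 \<le> opnorm n k X" "opnorm n k X \<le> K"
proof -
  let ?T = "{vnorm n (\<lambda>i. \<Sum>j<k. X i j * v j) | v. vnorm k v \<le> 1}"
  have bdd: "bdd_above ?T" using assms(2) by (auto intro!: bdd_aboveI[of _ K])
  have "vnorm k (\<lambda>_. 0) \<le> 1" "vnorm n (\<lambda>i. \<Sum>j<k. X i j * (\<lambda>_. 0) j) = 0"
    by (simp_all add: vnorm_def)
  then have zero: "0 \<in> ?T" by force
  show "0 \<le> opnorm n k X" unfolding opnorm_def using cSup_upper[OF zero bdd] .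
  show "opnorm n k X \<le> K" unfolding opnorm_def using assms(2) zero by (intro cSup_least) auto
qed

text \<open>The isometry from C^r into C^N onto the coordinates m, ..., m + r - 1; its compression
  X* C X cuts out the corresponding diagonal block of C.\<close>

definition block_inclusion :: "nat \<Rightarrow> nat \<Rightarrow> nat \<Rightarrow> complex" where
  "block_inclusion m p i = (if p = i + m then 1 else 0)"

lemma block_inclusion_apply:
  "(\<Sum>j<r. block_inclusion m i j * v j) = (if m \<le> i \<and> i < m + r then v (i - m) else 0)"
proof (cases "m \<le> i")
  case True
  then have "(\<Sum>j<r. block_inclusion m i j * v j) = (\<Sum>j<r. if j = i - m then v j else 0)"
    by (intro sum.cong) (auto simp: block_inclusion_def)
  with True show ?thesis by auto
qed (auto simp: block_inclusion_def intro!: sum.neutral)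

lemma vnorm_block_inclusion:
  assumes "m + r \<le> N"
  shows "vnorm N (\<lambda>i. \<Sum>j<r. block_inclusion m i j * v j) = vnorm r v"
proof -
  have "(\<Sum>i<N. (cmod (\<Sum>j<r. block_inclusion m i j * v j))\<^sup>2)
      = (\<Sum>i\<in>{i\<in>{..<N}. m \<le> i \<and> i < m + r}. (cmod (v (i - m)))\<^sup>2)"
    by (subst sum.inter_filter) (auto simp: block_inclusion_apply intro!: sum.cong)
  also have "{i\<in>{..<N}. m \<le> i \<and> i < m + r} = {0 + m..<r + m}" using assms by auto
  also have "(\<Sum>i\<in>{0 + m..<r + m}. (cmod (v (i - m)))\<^sup>2) = (\<Sum>i<r. (cmod (v i))\<^sup>2)"
    by (subst sum.shift_bounds_nat_ivl) (simp add: lessThan_atLeast0)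
  finally show ?thesis by (simp add: vnorm_def)
qed

lemma opnorm_block_inclusion_sq_le:
  assumes "m + r \<le> N"
  shows "(opnorm N r (block_inclusion m))\<^sup>2 \<le> 1"
  using opnorm_bounded[of 1 r N "block_inclusion m"] vnorm_block_inclusion[OF assms]
  by (simp add: power_le_one)

text \<open>The column a e_i + b e_k (the column index j is ignored); its compression X* M X is the
  1 x 1 matrix with entry \<open>pair_compression\<close>.\<close>

definition two_point_column :: "nat \<Rightarrow> nat \<Rightarrow> complex \<Rightarrow> complex \<Rightarrow> nat \<Rightarrow> nat \<Rightarrow> complex" where
  "two_point_column i k a b p j = (if p = i then a else 0) + (if p = k then b else 0)"

definition pair_compression ::
  "(complex \<Rightarrow> 'v::real_vector \<Rightarrow> 'v) \<Rightarrow> nat \<Rightarrow> nat \<Rightarrow> complex \<Rightarrow> complex \<Rightarrow> (nat \<Rightarrow> nat \<Rightarrow> 'v) \<Rightarrow> 'v"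
  where
  "pair_compression sc i k a b M =
     sc (cnj a * a) (M i i) + sc (cnj a * b) (M i k) + sc (cnj b * a) (M k i) + sc (cnj b * b) (M k k)"

lemma vnorm_le_uniform:
  assumes "\<And>p. cmod (w p) \<le> K" "0 \<le> K"
  shows "vnorm n w \<le> sqrt (real n) * K"
proof -
  have "(\<Sum>p<n. (cmod (w p))\<^sup>2) \<le> real n * K\<^sup>2"
    using sum_mono[of "{..<n}" "\<lambda>p. (cmod (w p))\<^sup>2" "\<lambda>_. K\<^sup>2"] assms by (simp add: power_mono)
  then have "vnorm n w \<le> sqrt (real n * K\<^sup>2)" unfolding vnorm_def by (rule real_sqrt_le_mono)
  with assms(2) show ?thesis by (simp add: real_sqrt_mult)
qed

lemma opnorm_two_point_column_sq_le:
  "(opnorm n 1 (two_point_column i k a b))\<^sup>2 \<le> (sqrt (real n) * (cmod a + cmod b))\<^sup>2"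
proof -
  have "vnorm n (\<lambda>p. \<Sum>j<1. two_point_column i k a b p j * v j) \<le> sqrt (real n) * (cmod a + cmod b)"
    if "vnorm 1 v \<le> 1" for v
  proof (rule vnorm_le_uniform)
    have v0: "cmod (v 0) \<le> 1" using that by (simp add: vnorm_def)
    fix p
    have "cmod (two_point_column i k a b p 0) \<le> cmod a + cmod b"
      unfolding two_point_column_def by (rule order_trans[OF norm_triangle_ineq]) auto
    with v0 have "cmod (two_point_column i k a b p 0) * cmod (v 0) \<le> (cmod a + cmod b) * 1"
      by (intro mult_mono) auto
    then show "cmod (\<Sum>j<1. two_point_column i k a b p j * v j) \<le> cmod a + cmod b"
      by (simp add: norm_mult)
  qed simp
  from opnorm_bounded[OF _ this] show ?thesis by (intro power_mono) auto
qed

subsection \<open>Quotient gauges modulo a self-adjoint subspace\<close>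

locale LinfMOS_quotient =
  fixes sc :: "complex \<Rightarrow> 'v::real_vector \<Rightarrow> 'v"
    and st :: "'v \<Rightarrow> 'v"
    and \<nu> :: "nat \<Rightarrow> (nat \<Rightarrow> nat \<Rightarrow> 'v) \<Rightarrow> real"
    and S :: "'v set"
  assumes MOS: "LinfMOS sc st \<nu>"
    and subspace: "sa_subspace sc st S"
begin

lemma is_star_space: "star_space sc st"
  using MOS by (simp add: LinfMOS_def LinfMOS_mod_def)

sublocale M: module sc
  using is_star_space by (simp add: star_space_def)

sublocale ST: additive st
  using is_star_space by unfold_locales (simp add: star_space_def)

lemma st_sc: "st (sc c x) = sc (cnj c) (st x)"
  using is_star_space by (simp add: star_space_def)

lemma sc_of_real: "sc (complex_of_real r) x = r *\<^sub>R x"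
  using is_star_space by (simp add: star_space_def)

lemma st_scaleR: "st (r *\<^sub>R x) = r *\<^sub>R st x"
  using st_sc[of "complex_of_real r" x] by (simp add: sc_of_real)

lemma nu_nonneg: "n \<ge> 1 \<Longrightarrow> A \<in> msa st n \<Longrightarrow> 0 \<le> \<nu> n A"
  using MOS unfolding LinfMOS_def LinfMOS_mod_def by blast

lemma nu_subadditive:
  "n \<ge> 1 \<Longrightarrow> A \<in> msa st n \<Longrightarrow> B \<in> msa st n \<Longrightarrow> \<nu> n (\<lambda>i j. A i j + B i j) \<le> \<nu> n A + \<nu> n B"
  using MOS unfolding LinfMOS_def LinfMOS_mod_def by blast

lemma nu_scaleR: "n \<ge> 1 \<Longrightarrow> A \<in> msa st n \<Longrightarrow> t \<ge> 0 \<Longrightarrow> \<nu> n (\<lambda>i j. t *\<^sub>R A i j) = t * \<nu> n A"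
  using MOS unfolding LinfMOS_def LinfMOS_mod_def by blast

lemma nu_congr:
  "n \<ge> 1 \<Longrightarrow> k \<ge> 1 \<Longrightarrow> A \<in> msa st n \<Longrightarrow> \<nu> k (congr sc n k X A) \<le> (opnorm n k X)\<^sup>2 * \<nu> n A"
  using MOS unfolding LinfMOS_def LinfMOS_mod_def by blast

lemma nu_dsum: "n \<ge> 1 \<Longrightarrow> k \<ge> 1 \<Longrightarrow> A \<in> msa st n \<Longrightarrow> B \<in> msa st k
    \<Longrightarrow> \<nu> (n + k) (dsum n k A B) = max (\<nu> n A) (\<nu> k B)"
  using MOS unfolding LinfMOS_def LinfMOS_mod_def by blast

lemma S_zero [simp]: "0 \<in> S"
  using subspace by (simp add: sa_subspace_def)

lemma S_add: "x \<in> S \<Longrightarrow> y \<in> S \<Longrightarrow> x + y \<in> S"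
  using subspace by (simp add: sa_subspace_def)

lemma S_scale: "x \<in> S \<Longrightarrow> sc c x \<in> S"
  using subspace by (simp add: sa_subspace_def)

lemma S_minus: "x \<in> S \<Longrightarrow> - x \<in> S"
  using S_scale[of x "-1"] by simp

lemma S_diff: "x \<in> S \<Longrightarrow> y \<in> S \<Longrightarrow> x - y \<in> S"
  using S_add[OF _ S_minus[of y], of x] by simp

lemma S_scaleR: "x \<in> S \<Longrightarrow> r *\<^sub>R x \<in> S"
  using S_scale[of x "complex_of_real r"] by (simp add: sc_of_real)

lemma S_sum: "(\<And>i. i \<in> I \<Longrightarrow> f i \<in> S) \<Longrightarrow> sum f I \<in> S"
  using subspace
  by (induction I rule: infinite_finite_induct) (auto simp: sa_subspace_def)

lemma msa_iff: "A \<in> msa st n \<longleftrightarrow> A \<in> mats n \<and> (\<forall>i j. st (A j i) = A i j)"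
  unfolding msa_def mstar_def by (auto simp: fun_eq_iff)

lemma msa_add: "A \<in> msa st n \<Longrightarrow> B \<in> msa st n \<Longrightarrow> (\<lambda>i j. A i j + B i j) \<in> msa st n"
  by (auto simp: msa_iff mats_def ST.add)

lemma msa_diff: "A \<in> msa st n \<Longrightarrow> B \<in> msa st n \<Longrightarrow> (\<lambda>i j. A i j - B i j) \<in> msa st n"
  by (auto simp: msa_iff mats_def ST.diff)

lemma msa_uminus: "A \<in> msa st n \<Longrightarrow> (\<lambda>i j. - A i j) \<in> msa st n"
  by (auto simp: msa_iff mats_def ST.minus)

lemma msa_scaleR: "A \<in> msa st n \<Longrightarrow> (\<lambda>i j. t *\<^sub>R A i j) \<in> msa st n"
  by (auto simp: msa_iff mats_def st_scaleR)

lemma msa_congr: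
  assumes "A \<in> msa st n"
  shows "congr sc n k X A \<in> msa st k"
proof -
  have sa: "st (A p q) = A q p" for p q using assms by (simp add: msa_iff)
  have "st (congr sc n k X A j i) = congr sc n k X A i j" for i j
  proof (cases "i < k \<and> j < k")
    case True
    have "st (\<Sum>p<n. \<Sum>q<n. sc (cnj (X p j) * X q i) (A p q))
        = (\<Sum>p<n. \<Sum>q<n. sc (cnj (X q i) * X p j) (A q p))"
      by (simp add: ST.sum st_sc sa mult.commute)
    also have "\<dots> = (\<Sum>q<n. \<Sum>p<n. sc (cnj (X q i) * X p j) (A q p))" by (rule sum.swap)
    finally show ?thesis using True by (auto simp: congr_def)
  qed (auto simp: congr_def ST.zero)
  then show ?thesis by (auto simp: msa_iff mats_def congr_def)
qed

lemma msa_dsum: "A \<in> msa st n \<Longrightarrow> B \<in> msa st k \<Longrightarrow> dsum n k A B \<in> msa st (n + k)"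
  by (auto simp: msa_iff mats_def dsum_def ST.zero)

lemma congr_diff:
  "congr sc n k X (\<lambda>i j. B i j - A i j) = (\<lambda>i j. congr sc n k X B i j - congr sc n k X A i j)"
  by (auto simp: congr_def M.scale_right_diff_distrib sum_subtractf intro!: ext)

lemma congr_in_S: "(\<And>i j. M i j \<in> S) \<Longrightarrow> congr sc n k X M i j \<in> S"
  by (auto simp: congr_def intro!: S_sum S_scale)

lemma congr_block_inclusion:
  assumes "m + r \<le> N"
  shows "congr sc N r (block_inclusion m) C = (\<lambda>i j. if i < r \<and> j < r then C (i + m) (j + m) else 0)"
proof (intro ext)
  fix i j
  have sc_if: "sc (if P then c else c') x = (if P then sc c x else sc c' x)" for P c c' x
    by simp
  have "(\<Sum>p<N. \<Sum>q<N. sc (cnj (block_inclusion m p i) * block_inclusion m q j) (C p q))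
      = (\<Sum>p<N. if p = i + m then (\<Sum>q<N. if q = j + m then C p q else 0) else 0)"
    by (intro sum.cong) (auto simp: block_inclusion_def sc_if M.scale_one M.scale_zero_left
        cong: if_cong intro!: sum.cong sum.neutral)
  then show "congr sc N r (block_inclusion m) C i j = (if i < r \<and> j < r then C (i + m) (j + m) else 0)"
    using assms by (auto simp: congr_def)
qed

lemma sum_two_point_column:
  assumes "i < n" "k < n" "\<And>x y. f (x + y) = f x + f y" "f 0 = 0"
  shows "(\<Sum>q<n. sc (f (two_point_column i k a b q 0)) (m q)) = sc (f a) (m i) + sc (f b) (m k)"
proof -
  have "(\<Sum>q<n. sc (f (two_point_column i k a b q 0)) (m q))
      = (\<Sum>q<n. (if q = i then sc (f a) (m q) else 0) + (if q = k then sc (f b) (m q) else 0))"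
    using assms(3,4) by (intro sum.cong) (auto simp: two_point_column_def M.scale_left_distrib)
  with assms show ?thesis by (simp add: sum.distrib)
qed

lemma congr_two_point_column:
  assumes "i < n" "k < n"
  shows "congr sc n 1 (two_point_column i k a b) M = emb1 (pair_compression sc i k a b M)"
proof (intro ext)
  fix r s
  let ?X = "two_point_column i k a b"
  have inner: "(\<Sum>q<n. sc (c * ?X q 0) (M p q)) = sc (c * a) (M p i) + sc (c * b) (M p k)" for c p
    by (rule sum_two_point_column[where f = "\<lambda>x. c * x"]) (simp_all add: assms distrib_left)
  have outer: "(\<Sum>p<n. sc (cnj (?X p 0) * c) (N p)) = sc (cnj a * c) (N i) + sc (cnj b * c) (N k)" for c N
    by (rule sum_two_point_column[where f = "\<lambda>x. cnj x * c"]) (simp_all add: assms distrib_right)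
  have "(\<Sum>p<n. \<Sum>q<n. sc (cnj (?X p 0) * ?X q 0) (M p q))
      = (\<Sum>p<n. sc (cnj (?X p 0) * a) (M p i)) + (\<Sum>p<n. sc (cnj (?X p 0) * b) (M p k))"
    by (simp add: inner sum.distrib)
  also have "\<dots> = pair_compression sc i k a b M"
    by (simp add: outer pair_compression_def add_ac)
  finally show "congr sc n 1 (two_point_column i k a b) M r s = emb1 (pair_compression sc i k a b M) r s"
    by (auto simp: congr_def emb1_def)
qed

definition coset :: "nat \<Rightarrow> (nat \<Rightarrow> nat \<Rightarrow> 'v) \<Rightarrow> (nat \<Rightarrow> nat \<Rightarrow> 'v) set" where
  "coset n A = {B. B \<in> msa st n \<and> (\<lambda>i j. B i j - A i j) \<in> mats_in S n \<inter> msa st n}"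

lemma quot_gauge_coset: "quot_gauge st \<nu> S n A = Inf (\<nu> n ` coset n A)"
  unfolding quot_gauge_def coset_def by (intro arg_cong[where f = Inf]) blast

lemma coset_iff: "A \<in> msa st n \<Longrightarrow> B \<in> coset n A \<longleftrightarrow> B \<in> msa st n \<and> (\<forall>i j. B i j - A i j \<in> S)"
  unfolding coset_def by (auto simp: msa_diff mats_in_def msa_iff mats_def ST.diff)

lemma self_in_coset: "A \<in> msa st n \<Longrightarrow> A \<in> coset n A"
  by (simp add: coset_iff)

lemma quot_gauge_le: "n \<ge> 1 \<Longrightarrow> A \<in> msa st n \<Longrightarrow> B \<in> coset n A \<Longrightarrow> quot_gauge st \<nu> S n A \<le> \<nu> n B"
  unfolding quot_gauge_coset
  by (rule cInf_lower) (auto simp: coset_def intro!: bdd_belowI[of _ 0] nu_nonneg)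

lemma quot_gauge_greatest:
  "A \<in> msa st n \<Longrightarrow> (\<And>B. B \<in> coset n A \<Longrightarrow> c \<le> \<nu> n B) \<Longrightarrow> c \<le> quot_gauge st \<nu> S n A"
  unfolding quot_gauge_coset by (rule cInf_greatest) (auto dest: self_in_coset)

lemma quot_gauge_mult_greatest:
  assumes "A \<in> msa st n" "0 \<le> t" and le: "\<And>B. B \<in> coset n A \<Longrightarrow> c \<le> t * \<nu> n B"
  shows "c \<le> t * quot_gauge st \<nu> S n A"
proof (cases "t = 0")
  case True
  then show ?thesis using le[OF self_in_coset[OF assms(1)]] by simp
next
  case False
  with assms have "c / t \<le> quot_gauge st \<nu> S n A"
    by (intro quot_gauge_greatest) (auto simp: field_simps mult.commute)
  with False assms(2) show ?thesis by (simp add: field_simps mult.commute)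
qed

lemma quot_gauge_lessD:
  "A \<in> msa st n \<Longrightarrow> quot_gauge st \<nu> S n A < e \<Longrightarrow> \<exists>B\<in>coset n A. \<nu> n B < e"
  unfolding quot_gauge_coset using cInf_lessD[of "\<nu> n ` coset n A" e] self_in_coset by blast

lemma quot_gauge_nonneg: "n \<ge> 1 \<Longrightarrow> A \<in> msa st n \<Longrightarrow> 0 \<le> quot_gauge st \<nu> S n A"
  by (rule quot_gauge_greatest) (auto simp: coset_def intro: nu_nonneg)

lemma quot_gauge_zero_imp_null_sequence:
  assumes "n \<ge> 1" "A \<in> msa st n" "quot_gauge st \<nu> S n A = 0"
  obtains B where "\<And>j. B j \<in> coset n A" "(\<lambda>j. \<nu> n (B j)) \<longlonglongrightarrow> 0"
proof -
  have "\<exists>B\<in>coset n A. \<nu> n B < inverse (real (Suc j))" for j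
    using quot_gauge_lessD[OF assms(2), of "inverse (real (Suc j))"] assms(3) by simp
  then obtain B where B: "\<And>j. B j \<in> coset n A" "\<And>j. \<nu> n (B j) < inverse (real (Suc j))"
    by metis
  have "0 \<le> \<nu> n (B j)" for j
    using B(1) assms(1) by (simp add: coset_def nu_nonneg)
  with B(2) have "(\<lambda>j. \<nu> n (B j)) \<longlonglongrightarrow> 0"
    by (intro tendsto_sandwich[OF _ _ tendsto_const LIMSEQ_inverse_real_of_nat])
       (auto intro: always_eventually less_imp_le)
  with B(1) show thesis by (rule that)
qed

lemma quot_gauge_coset_invariant:
  assumes "A \<in> msa st n" "B \<in> msa st n" "(\<lambda>i j. A i j - B i j) \<in> mats_in S n"
  shows "quot_gauge st \<nu> S n A = quot_gauge st \<nu> S n B"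
proof -
  have AB: "\<forall>i j. A i j - B i j \<in> S" using assms(3) by (simp add: mats_in_def)
  have "C i j - A i j \<in> S \<longleftrightarrow> C i j - B i j \<in> S" for C i j
    using S_diff[OF _ AB[rule_format, of i j], of "C i j - B i j"]
      S_add[OF _ AB[rule_format, of i j], of "C i j - A i j"] by auto
  then have "coset n A = coset n B" using assms by (auto simp: coset_iff)
  then show ?thesis by (simp add: quot_gauge_coset)
qed

lemma quot_gauge_subadditive:
  assumes n: "n \<ge> 1" and A: "A \<in> msa st n" and B: "B \<in> msa st n"
  shows "quot_gauge st \<nu> S n (\<lambda>i j. A i j + B i j) \<le> quot_gauge st \<nu> S n A + quot_gauge st \<nu> S n B"
proof -
  let ?q = "quot_gauge st \<nu> S n"
  have AB: "(\<lambda>i j. A i j + B i j) \<in> msa st n" using A B by (rule msa_add)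
  have le: "?q (\<lambda>i j. A i j + B i j) - \<nu> n B' \<le> \<nu> n A'" if "A' \<in> coset n A" "B' \<in> coset n B" for A' B'
  proof -
    have A': "A' \<in> msa st n" "\<forall>i j. A' i j - A i j \<in> S"
      and B': "B' \<in> msa st n" "\<forall>i j. B' i j - B i j \<in> S"
      using that A B by (auto simp: coset_iff)
    have "(A' i j + B' i j) - (A i j + B i j) \<in> S" for i j
      using S_add[of "A' i j - A i j" "B' i j - B i j"] A' B' by (simp add: algebra_simps)
    then have "(\<lambda>i j. A' i j + B' i j) \<in> coset n (\<lambda>i j. A i j + B i j)"
      using A' B' AB by (simp add: coset_iff msa_add)
    from quot_gauge_le[OF n AB this] nu_subadditive[OF n A'(1) B'(1)] show ?thesis by simp
  qed
  then have "?q (\<lambda>i j. A i j + B i j) - \<nu> n B' \<le> ?q A" if "B' \<in> coset n B" for B'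
    using that by (intro quot_gauge_greatest[OF A])
  then have "?q (\<lambda>i j. A i j + B i j) - ?q A \<le> ?q B"
    by (intro quot_gauge_greatest[OF B]) (auto simp: algebra_simps)
  then show ?thesis by simp
qed

lemma quot_gauge_scaleR_le:
  assumes n: "n \<ge> 1" and A: "A \<in> msa st n" and t: "t \<ge> 0"
  shows "quot_gauge st \<nu> S n (\<lambda>i j. t *\<^sub>R A i j) \<le> t * quot_gauge st \<nu> S n A"
proof (rule quot_gauge_mult_greatest[OF A t])
  fix A' assume "A' \<in> coset n A"
  then have A': "A' \<in> msa st n" "\<forall>i j. A' i j - A i j \<in> S" using A by (auto simp: coset_iff)
  have "t *\<^sub>R A' i j - t *\<^sub>R A i j \<in> S" for i j
    using S_scaleR[OF A'(2)[rule_format, of i j], of t] by (simp add: algebra_simps)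
  then have "(\<lambda>i j. t *\<^sub>R A' i j) \<in> coset n (\<lambda>i j. t *\<^sub>R A i j)"
    using A A' by (simp add: coset_iff msa_scaleR)
  from quot_gauge_le[OF n msa_scaleR[OF A] this] nu_scaleR[OF n A'(1) t]
  show "quot_gauge st \<nu> S n (\<lambda>i j. t *\<^sub>R A i j) \<le> t * \<nu> n A'" by simp
qed

lemma quot_gauge_scaleR:
  assumes n: "n \<ge> 1" and A: "A \<in> msa st n" and t: "t \<ge> 0"
  shows "quot_gauge st \<nu> S n (\<lambda>i j. t *\<^sub>R A i j) = t * quot_gauge st \<nu> S n A"
proof (cases "t = 0")
  case True
  have "quot_gauge st \<nu> S n (\<lambda>i j. 0) \<le> 0"
    using quot_gauge_scaleR_le[OF n A, of 0] by simp
  with True quot_gauge_nonneg[OF n, of "\<lambda>i j. 0"] msa_scaleR[OF A, of 0] show ?thesis by simp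
next
  case False
  with t have "quot_gauge st \<nu> S n A \<le> (1 / t) * quot_gauge st \<nu> S n (\<lambda>i j. t *\<^sub>R A i j)"
    using quot_gauge_scaleR_le[OF n msa_scaleR[OF A], of "1 / t" t] by simp
  with False t have "t * quot_gauge st \<nu> S n A \<le> quot_gauge st \<nu> S n (\<lambda>i j. t *\<^sub>R A i j)"
    by (simp add: field_simps)
  with quot_gauge_scaleR_le[OF n A t] show ?thesis by simp
qed

lemma quot_gauge_congr:
  assumes n: "n \<ge> 1" and k: "k \<ge> 1" and A: "A \<in> msa st n"
  shows "quot_gauge st \<nu> S k (congr sc n k X A) \<le> (opnorm n k X)\<^sup>2 * quot_gauge st \<nu> S n A"
proof (rule quot_gauge_mult_greatest[OF A zero_le_power2])
  fix B assume "B \<in> coset n A"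
  then have B: "B \<in> msa st n" "\<forall>i j. B i j - A i j \<in> S" using A by (auto simp: coset_iff)
  then have "congr sc n k X B \<in> coset k (congr sc n k X A)"
    using congr_in_S[of "\<lambda>i j. B i j - A i j" n k X] by (simp add: coset_iff msa_congr A congr_diff)
  from order_trans[OF quot_gauge_le[OF k msa_congr[OF A] this] nu_congr[OF n k B(1)]]
  show "quot_gauge st \<nu> S k (congr sc n k X A) \<le> (opnorm n k X)\<^sup>2 * \<nu> n B" .
qed

text \<open>Compressing a representative C of A (+) B to its two diagonal blocks gives
  representatives of A and of B whose gauges are at most that of C.\<close>

lemma quot_gauge_dsum_ge:
  assumes n: "n \<ge> 1" and k: "k \<ge> 1" and A: "A \<in> msa st n" and B: "B \<in> msa st k"
  shows "max (quot_gauge st \<nu> S n A) (quot_gauge st \<nu> S k B) \<le> quot_gauge st \<nu> S (n + k) (dsum n k A B)"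
proof (rule quot_gauge_greatest[OF msa_dsum[OF A B]])
  let ?q = "quot_gauge st \<nu> S"
  fix C assume "C \<in> coset (n + k) (dsum n k A B)"
  then have C: "C \<in> msa st (n + k)" "\<forall>i j. C i j - dsum n k A B i j \<in> S"
    using msa_dsum[OF A B] by (auto simp: coset_iff)
  have block_le: "?q r D \<le> \<nu> (n + k) C"
    if "r \<ge> 1" "m + r \<le> n + k" "D \<in> msa st r" "\<And>i j. i < r \<Longrightarrow> j < r \<Longrightarrow> dsum n k A B (i + m) (j + m) = D i j"
    for r m D
  proof -
    have D0: "D i j = 0" if "\<not> (i < r \<and> j < r)" for i j
      using \<open>D \<in> msa st r\<close> that by (simp add: msa_iff mats_def)
    have "congr sc (n + k) r (block_inclusion m) C i j - D i j \<in> S" for i j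
    proof (cases "i < r \<and> j < r")
      case True
      with C(2)[rule_format, of "i + m" "j + m"] that(4)[of i j] show ?thesis
        by (simp add: congr_block_inclusion[OF that(2)])
    next
      case False
      with D0[OF False] show ?thesis by (auto simp: congr_block_inclusion[OF that(2)])
    qed
    then have "congr sc (n + k) r (block_inclusion m) C \<in> coset r D"
      using that(3) msa_congr[OF C(1)] by (simp add: coset_iff)
    then have "?q r D \<le> \<nu> r (congr sc (n + k) r (block_inclusion m) C)"
      by (rule quot_gauge_le[OF that(1,3)])
    also have "\<dots> \<le> (opnorm (n + k) r (block_inclusion m))\<^sup>2 * \<nu> (n + k) C"
      using nu_congr[OF _ that(1) C(1)] n by simp
    also have "\<dots> \<le> \<nu> (n + k) C"
      using opnorm_block_inclusion_sq_le[OF that(2)] nu_nonneg[OF _ C(1)] n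
      by (simp add: mult_left_le_one_le)
    finally show ?thesis .
  qed
  have "?q n A \<le> \<nu> (n + k) C" by (rule block_le[where m = 0, OF n _ A]) (auto simp: dsum_def)
  moreover have "?q k B \<le> \<nu> (n + k) C" by (rule block_le[where m = n, OF k _ B]) (auto simp: dsum_def)
  ultimately show "max (?q n A) (?q k B) \<le> \<nu> (n + k) C" by simp
qed

lemma quot_gauge_dsum:
  assumes n: "n \<ge> 1" and k: "k \<ge> 1" and A: "A \<in> msa st n" and B: "B \<in> msa st k"
  shows "quot_gauge st \<nu> S (n + k) (dsum n k A B) = max (quot_gauge st \<nu> S n A) (quot_gauge st \<nu> S k B)"
proof -
  let ?q = "quot_gauge st \<nu> S"
  have D: "dsum n k A B \<in> msa st (n + k)" using A B by (rule msa_dsum)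
  have le: "?q (n + k) (dsum n k A B) \<le> max (\<nu> n A') (\<nu> k B')"
    if "A' \<in> coset n A" "B' \<in> coset k B" for A' B'
  proof -
    have a: "A' \<in> msa st n" "\<forall>i j. A' i j - A i j \<in> S"
      and b: "B' \<in> msa st k" "\<forall>i j. B' i j - B i j \<in> S"
      using that A B by (auto simp: coset_iff)
    have "dsum n k A' B' i j - dsum n k A B i j \<in> S" for i j
      using a b by (auto simp: dsum_def)
    then have "dsum n k A' B' \<in> coset (n + k) (dsum n k A B)"
      using msa_dsum[OF a(1) b(1)] D by (simp add: coset_iff)
    from quot_gauge_le[OF _ D this] nu_dsum[OF n k a(1) b(1)] show ?thesis using n by simp
  qed
  have "?q (n + k) (dsum n k A B) \<le> max (?q n A) (?q k B)"
  proof (rule ccontr)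
    assume "\<not> ?thesis"
    then obtain A' B' where "A' \<in> coset n A" "\<nu> n A' < ?q (n + k) (dsum n k A B)"
      "B' \<in> coset k B" "\<nu> k B' < ?q (n + k) (dsum n k A B)"
      using quot_gauge_lessD[OF A] quot_gauge_lessD[OF B] by (meson max.strict_boundedE not_le)
    with le show False by fastforce
  qed
  with quot_gauge_dsum_ge[OF assms] show ?thesis by linarith
qed

end

subsection \<open>Properness modulo an ideal\<close>

locale LinfMOS_ideal_quotient = LinfMOS_quotient +
  assumes ideal: "gauge_ideal {x. st x = x} (\<lambda>x. \<nu> 1 (emb1 x)) (S \<inter> {x. st x = x})"
begin

lemma pair_compression_self_adjoint:
  assumes "i < n" "k < n" "M \<in> msa st n"
  shows "st (pair_compression sc i k a b M) = pair_compression sc i k a b M"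
proof -
  have "emb1 (pair_compression sc i k a b M) \<in> msa st 1"
    using msa_congr[OF assms(3), of 1 "two_point_column i k a b"] congr_two_point_column[OF assms(1,2)]
    by simp
  then have "\<forall>r s. st (emb1 (pair_compression sc i k a b M) s r) = emb1 (pair_compression sc i k a b M) r s"
    by (simp add: msa_iff)
  from this[rule_format, of 0 0] show ?thesis by (simp add: emb1_def)
qed

lemma pair_compression_null_sequence:
  assumes "n \<ge> 1" "i < n" "k < n" "\<And>j. M j \<in> msa st n" "(\<lambda>j. \<nu> n (M j)) \<longlonglongrightarrow> 0"
  shows "(\<lambda>j. \<nu> 1 (emb1 (pair_compression sc i k a b (M j)))) \<longlonglongrightarrow> 0"
proof -
  let ?K = "(sqrt (real n) * (cmod a + cmod b))\<^sup>2"
  have "\<nu> 1 (emb1 (pair_compression sc i k a b (M j))) \<le> (opnorm n 1 (two_point_column i k a b))\<^sup>2 * \<nu> n (M j)" for j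
    using nu_congr[OF assms(1) _ assms(4), where k = 1 and X = "two_point_column i k a b"]
      congr_two_point_column[OF assms(2,3)] by simp
  also have "\<dots> j \<le> ?K * \<nu> n (M j)" for j
    using opnorm_two_point_column_sq_le nu_nonneg[OF assms(1,4)] by (rule mult_right_mono)
  finally have up: "\<nu> 1 (emb1 (pair_compression sc i k a b (M j))) \<le> ?K * \<nu> n (M j)" for j .
  have "0 \<le> \<nu> 1 (emb1 (pair_compression sc i k a b (M j)))" for j
    using nu_nonneg[OF _ msa_congr[OF assms(4), where k = 1 and X = "two_point_column i k a b"]]
      congr_two_point_column[OF assms(2,3)] by simp
  with up show ?thesis
    by (intro tendsto_sandwich[OF _ _ tendsto_const tendsto_mult_right_zero[OF assms(5)]])
       (auto intro: always_eventually)
qed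

text \<open>If B_j in A + M_n(S)_sa and C_j in -A + M_n(S)_sa have vanishing gauges, then the compressions
  of A - B_j and of C_j + A lie in S and approximate that of A from below and from above.\<close>

lemma pair_compression_in_ideal:
  assumes n: "n \<ge> 1" and A: "A \<in> msa st n" and ik: "i < n" "k < n"
    and q: "quot_gauge st \<nu> S n A = 0" "quot_gauge st \<nu> S n (\<lambda>r s. - A r s) = 0"
  shows "pair_compression sc i k a b A \<in> S"
proof -
  let ?E = "pair_compression sc i k a b"
  have E_in_S: "?E M \<in> S" if "\<And>r s. M r s \<in> S" for M
    using that by (simp add: pair_compression_def S_add S_scale)
  obtain B where B: "\<And>j. B j \<in> coset n A" "(\<lambda>j. \<nu> n (B j)) \<longlonglongrightarrow> 0"
    using quot_gauge_zero_imp_null_sequence[OF n A q(1)] by blast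
  obtain C where C: "\<And>j. C j \<in> coset n (\<lambda>r s. - A r s)" "(\<lambda>j. \<nu> n (C j)) \<longlonglongrightarrow> 0"
    using quot_gauge_zero_imp_null_sequence[OF n msa_uminus[OF A] q(2)] by blast
  have Bm: "B j \<in> msa st n" "A r s - B j r s \<in> S" for j r s
    using B(1)[of j] A S_minus[of "B j r s - A r s"] by (auto simp: coset_iff)
  have Cm: "C j \<in> msa st n" "C j r s + A r s \<in> S" for j r s
    using C(1)[of j] msa_uminus[OF A] by (auto simp: coset_iff)
  have "?E A \<in> S \<inter> {x. st x = x}"
  proof (rule ideal[unfolded gauge_ideal_def, rule_format])
    show "?E A \<in> {x. st x = x}" using pair_compression_self_adjoint[OF ik A] by simp
    have "?E A - ?E (\<lambda>r s. A r s - B j r s) = ?E (B j)"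
      and "?E (\<lambda>r s. C j r s + A r s) - ?E A = ?E (C j)" for j
      by (simp_all add: pair_compression_def M.scale_right_diff_distrib M.scale_right_distrib algebra_simps)
    with pair_compression_null_sequence[OF n ik Bm(1) B(2)] pair_compression_null_sequence[OF n ik Cm(1) C(2)]
      pair_compression_self_adjoint[OF ik msa_diff[OF A Bm(1)]]
      pair_compression_self_adjoint[OF ik msa_add[OF Cm(1) A]] E_in_S Bm(2) Cm(2)
    show "\<exists>a b. (\<forall>j. a j \<in> S \<inter> {x. st x = x} \<and> b j \<in> S \<inter> {x. st x = x}) \<and>
      (\<lambda>j. \<nu> 1 (emb1 (?E A - a j))) \<longlonglongrightarrow> 0 \<and> (\<lambda>j. \<nu> 1 (emb1 (b j - ?E A))) \<longlonglongrightarrow> 0"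
      by (intro exI[of _ "\<lambda>j. ?E (\<lambda>r s. A r s - B j r s)"] exI[of _ "\<lambda>j. ?E (\<lambda>r s. C j r s + A r s)"])
         auto
  qed
  then show ?thesis by simp
qed

lemma quot_gauge_proper:
  assumes n: "n \<ge> 1" and A: "A \<in> msa st n"
    and q: "quot_gauge st \<nu> S n A = 0" "quot_gauge st \<nu> S n (\<lambda>r s. - A r s) = 0"
  shows "A \<in> mats_in S n"
proof -
  have "A i k \<in> S" if ik: "i < n" "k < n" for i k
  proof -
    note P = pair_compression_in_ideal[OF n A ik q]
    have ii: "A i i \<in> S" and kk: "A k k \<in> S"
      using P[of 1 0] P[of 0 1] by (simp_all add: pair_compression_def)
    have "A i i + A i k + A k i + A k k \<in> S"
      using P[of 1 1] by (simp add: pair_compression_def)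
    from S_diff[OF S_diff[OF this ii] kk] have sym: "A i k + A k i \<in> S"
      by (simp add: algebra_simps)
    have "A i i + sc \<i> (A i k) - sc \<i> (A k i) + A k k \<in> S"
      using P[of 1 \<i>] by (simp add: pair_compression_def M.scale_minus_left)
    from S_diff[OF S_diff[OF this ii] kk] have "sc \<i> (A i k) - sc \<i> (A k i) \<in> S"
      by (simp add: algebra_simps)
    then have "sc (- \<i>) (sc \<i> (A i k) - sc \<i> (A k i)) \<in> S" by (rule S_scale)
    then have antisym: "A i k - A k i \<in> S" by (simp add: M.scale_right_diff_distrib)
    have "A i k = (1/2) *\<^sub>R ((A i k + A k i) + (A i k - A k i))"
      by (simp add: algebra_simps scaleR_2[symmetric])
    with S_scaleR[OF S_add[OF sym antisym]] show ?thesis by metis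
  qed
  moreover have "A i k = 0" if "\<not> (i < n \<and> k < n)" for i k
    using A that by (simp add: msa_iff mats_def)
  ultimately have "A i k \<in> S" for i k by (cases "i < n \<and> k < n") auto
  with A show ?thesis by (simp add: mats_in_def msa_def)
qed

end

theorem theorem3p19:
  fixes sc :: "complex \<Rightarrow> 'v::real_vector \<Rightarrow> 'v"
    and st :: "'v \<Rightarrow> 'v"
    and \<nu> :: "nat \<Rightarrow> (nat \<Rightarrow> nat \<Rightarrow> 'v) \<Rightarrow> real"
    and S :: "'v set"
  assumes "LinfMOS sc st \<nu>"
    and "LinfMOS_ideal sc st \<nu> S"
  shows "LinfMOS_mod sc st S (quot_gauge st \<nu> S)"
proof -
  interpret LinfMOS_ideal_quotient sc st \<nu> S
    using assms by unfold_locales (auto simp: LinfMOS_ideal_def)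
  show ?thesis
    unfolding LinfMOS_mod_def
    by (intro conjI is_star_space subspace allI ballI impI; (elim conjE)?)
       (auto intro: quot_gauge_coset_invariant quot_gauge_nonneg quot_gauge_subadditive
         quot_gauge_scaleR quot_gauge_proper quot_gauge_congr quot_gauge_dsum)
qed

end
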